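(* Let $n\geq 2$. Let $SP^n(\mathbb{C})$ be the $n$-th symmetric power of $\mathbb{C}$ and $\Delta=\{\{z,\dots,z\}\mid z\in\mathbb{C}\}\subset SP^n(\mathbb{C})$ its diagonal, with $\mathbb{C}\rtimes\mathbb{C}^*$ acting on $SP^n(\mathbb{C})-\Delta$ by $z\mapsto\lambda z+\mu$ on each point. For $\mathbf{z}=\{z_1,\dots,z_n\}$ let $B(\mathbf{z})=(z_1+\dots+z_n)/n$ and let $a_0,\dots,a_{n-2}$ be the coefficients of $z^0,\dots,z^{n-2}$ in the monic polynomial $(z-z_1+B(\mathbf{z}))\cdots(z-z_n+B(\mathbf{z}))$. Then \[ \psi:\frac{SP^n(\mathbb{C})-\Delta}{\mathbb{C}\rtimes\mathbb{C}^*}\to\mathbb{P}(n,n-1,\dots,2),\qquad [\{z_1,\dots,z_n\}]\mapsto[a_0:\dots:a_{n-2}] \] is a well-defined homeomorphism.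
   Context: For positive integers $b_0,\dots,b_m$, the weighted projective space $\mathbb{P}(b_0,\dots,b_m)$ is $(\mathbb{C}^{m+1}-\{0\})/\sim$ where $(z_0,\dots,z_m)\sim(t^{b_0}z_0,\dots,t^{b_m}z_m)$ for $t\in\mathbb{C}^*$. Thus in $\mathbb{P}(n,n-1,\dots,2)$ the coordinate $a_k$ has weight $n-k$. *)

theory Defs
  imports "HOL-Analysis.Analysis" "HOL-Library.Multiset" "HOL-Computational_Algebra.Polynomial"
begin

definition quotient_topology :: "'a topology \<Rightarrow> ('a \<Rightarrow> 'b) \<Rightarrow> 'b topology" where
  "quotient_topology X f =
     topology (\<lambda>U. U \<subseteq> f ` topspace X \<and> openin X {x \<in> topspace X. f x \<in> U})"

lemma istopology_quotient:
  "istopology (\<lambda>U. U \<subseteq> f ` topspace X \<and> openin X {x \<in> topspace X. f x \<in> U})"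
proof -
  have 1: "{x \<in> topspace X. f x \<in> S \<inter> T} = {x \<in> topspace X. f x \<in> S} \<inter> {x \<in> topspace X. f x \<in> T}" for S T by blast
  have 2: "{x \<in> topspace X. f x \<in> \<Union>K} = \<Union>((\<lambda>S. {x \<in> topspace X. f x \<in> S}) ` K)" for K by blast
  show ?thesis unfolding istopology_def 1 2 by (auto intro!: openin_Int openin_Union)
qed

lemma openin_quotient_topology:
  "openin (quotient_topology X f) U \<longleftrightarrow>
     U \<subseteq> f ` topspace X \<and> openin X {x \<in> topspace X. f x \<in> U}"
  unfolding quotient_topology_def by (simp add: istopology_quotient)

text \<open>Points of C^n as functions on {..<n} (product topology); SP^n(C) as multisets of size n.\<close>
definition Cn :: "nat \<Rightarrow> (nat \<Rightarrow> complex) topology" where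
  "Cn n = product_topology (\<lambda>_. euclidean) {..<n}"

definition mset_of :: "nat \<Rightarrow> (nat \<Rightarrow> complex) \<Rightarrow> complex multiset" where
  "mset_of n z = mset (map z [0..<n])"

definition SP :: "nat \<Rightarrow> complex multiset topology" where
  "SP n = quotient_topology (Cn n) (mset_of n)"

definition diagonal :: "nat \<Rightarrow> complex multiset set" where
  "diagonal n = {replicate_mset n c | c. True}"

definition SP_minus_diag :: "nat \<Rightarrow> complex multiset topology" where
  "SP_minus_diag n = subtopology (SP n) (topspace (SP n) - diagonal n)"

definition aff_orbit :: "complex multiset \<Rightarrow> complex multiset set" where
  "aff_orbit m = {image_mset (\<lambda>x. l * x + u) m | l u. l \<noteq> 0}"

definition SP_orbits :: "nat \<Rightarrow> complex multiset set topology" where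
  "SP_orbits n = quotient_topology (SP_minus_diag n) aff_orbit"

text \<open>Weighted projective space P(w 0, ..., w (N-1)): (C^N - 0)/C^*.\<close>
definition wclass :: "(nat \<Rightarrow> nat) \<Rightarrow> nat \<Rightarrow> (nat \<Rightarrow> complex) \<Rightarrow> (nat \<Rightarrow> complex) set" where
  "wclass w N a = {restrict (\<lambda>k. t ^ w k * a k) {..<N} | t. t \<noteq> 0}"

definition wproj :: "(nat \<Rightarrow> nat) \<Rightarrow> nat \<Rightarrow> (nat \<Rightarrow> complex) set topology" where
  "wproj w N = quotient_topology
      (subtopology (Cn N) (topspace (Cn N) - {restrict (\<lambda>_. 0) {..<N}})) (wclass w N)"

definition bary :: "nat \<Rightarrow> complex multiset \<Rightarrow> complex" where
  "bary n m = sum_mset m / of_nat n"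

definition centred_poly :: "nat \<Rightarrow> complex multiset \<Rightarrow> complex poly" where
  "centred_poly n m = (\<Prod>x\<in>#m. [:bary n m - x, 1:])"

definition coefvec :: "nat \<Rightarrow> complex multiset \<Rightarrow> nat \<Rightarrow> complex" where
  "coefvec n m = restrict (\<lambda>k. coeff (centred_poly n m) k) {..<n - 1}"

end

theory Submission
  imports Defs "HOL-Computational_Algebra.Fundamental_Theorem_Algebra"
begin

text \<open>
  Moving the points by \<open>z \<mapsto> \<lambda>z + \<mu>\<close> turns the centred polynomial \<open>P\<close> into \<open>\<lambda>\<^sup>n P(z/\<lambda>)\<close>,
  multiplying its coefficient \<open>a\<^sub>k\<close> by \<open>\<lambda>\<^bsup>n-k\<^esup>\<close>. A centred polynomial has no
  \<open>z\<^bsup>n-1\<^esup>\<close> term, so it is determined by \<open>a\<^sub>0, \<dots>, a\<^sub>n\<^sub>-\<^sub>2\<close>, and it determines the centred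
  configuration as its multiset of roots. Hence \<open>\<psi>\<close> is well defined and injective; every depressed
  polynomial has roots summing to zero, so \<open>\<psi>\<close> is onto, and the coefficients vanish exactly on the
  diagonal. The coefficients are polynomial in the points, so \<open>\<psi>\<close> is continuous. Finally the
  orbit space is compact, since each orbit meets the compact set \<open>z\<^sub>0 = 0, \<Sum>|z\<^sub>i| = 1\<close>, and
  weighted projective space is Hausdorff, so the continuous bijection \<open>\<psi>\<close> is a homeomorphism.
\<close>

section \<open>Polynomials with prescribed roots\<close>

definition poly_of_roots :: "'a::comm_ring_1 multiset \<Rightarrow> 'a poly" where
  "poly_of_roots M = (\<Prod>x\<in>#M. [:- x, 1:])"

lemma poly_of_roots_empty [simp]: "poly_of_roots {#} = 1"
  by (simp add: poly_of_roots_def)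

lemma poly_of_roots_add_mset [simp]:
  "poly_of_roots (add_mset x M) = [:- x, 1:] * poly_of_roots M"
  by (simp add: poly_of_roots_def del: mult_pCons_left)

lemma poly_of_roots_nonzero: "poly_of_roots (M :: 'a::idom multiset) \<noteq> 0"
  by (induction M) (simp_all del: mult_pCons_left)

lemma degree_poly_of_roots [simp]: "degree (poly_of_roots (M :: 'a::idom multiset)) = size M"
  by (induction M) (simp_all add: degree_mult_eq poly_of_roots_nonzero del: mult_pCons_left)

lemma proots_poly_of_roots [simp]: "proots (poly_of_roots (M :: 'a::idom multiset)) = M"
  by (induction M) (simp_all add: proots_mult poly_of_roots_nonzero del: mult_pCons_left)

lemma poly_of_roots_proots:
  "lead_coeff p = 1 \<Longrightarrow> poly_of_roots (proots p) = (p :: complex poly)"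
  using complex_poly_decompose_multiset[of p] by (simp add: poly_of_roots_def)

lemma coeff_poly_of_roots_size [simp]:
  "coeff (poly_of_roots (M :: 'a::idom multiset)) (size M) = 1"
proof (induction M)
  case (add x M)
  have "coeff (poly_of_roots M) (Suc (size M)) = 0"
    by (simp add: coeff_eq_0)
  with add show ?case by simp
qed simp

lemma coeff_poly_of_roots_pred:
  assumes "size M = Suc k"
  shows "coeff (poly_of_roots (M :: 'a::idom multiset)) k = - sum_mset M"
  using assms
proof (induction M arbitrary: k)
  case (add x M)
  then show ?case
    using coeff_poly_of_roots_size[of M] by (cases k) (auto simp: coeff_pCons split: nat.split)
qed simp

text \<open>Multiplicative form, valid for every \<open>k\<close>: no truncated exponent \<open>size M - k\<close> occurs.\<close>

lemma coeff_poly_of_roots_scale_mult: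
  "l ^ k * coeff (poly_of_roots (image_mset ((*) l) M)) k
     = l ^ size M * coeff (poly_of_roots (M :: 'a::idom multiset)) k"
proof (induction M arbitrary: k)
  case empty
  then show ?case by (cases k) simp_all
next
  case (add x M)
  show ?case
  proof (cases k)
    case 0
    with add.IH[of 0] show ?thesis by (simp add: algebra_simps)
  next
    case (Suc j)
    with add.IH[of k] add.IH[of j] show ?thesis by (simp add: algebra_simps)
  qed
qed

lemma coeff_poly_of_roots_scale:
  assumes "l \<noteq> 0" "k \<le> size M"
  shows "coeff (poly_of_roots (image_mset ((*) l) M)) k
           = l ^ (size M - k) * coeff (poly_of_roots (M :: 'a::idom multiset)) k"
proof -
  have "l ^ size M = l ^ k * l ^ (size M - k)"
    using assms(2) by (simp flip: power_add)
  then show ?thesis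
    using coeff_poly_of_roots_scale_mult[of l k M] assms(1) by simp
qed

lemma poly_of_roots_replicate_0: "poly_of_roots (replicate_mset n 0) = (monom 1 n :: 'a::idom poly)"
  by (induction n) (simp_all add: monom_Suc)

definition depressed_poly :: "nat \<Rightarrow> (nat \<Rightarrow> 'a::comm_ring_1) \<Rightarrow> 'a poly" where
  "depressed_poly n a = monom 1 n + (\<Sum>k<n - 1. monom (a k) k)"

lemma coeff_depressed_poly:
  "coeff (depressed_poly n a) k = (if k = n then 1 else if k < n - 1 then a k else 0)"
  by (auto simp: depressed_poly_def coeff_sum coeff_monom)

lemma degree_depressed_poly [simp]: "degree (depressed_poly n a) = n"
  by (rule antisym) (auto intro!: degree_le le_degree simp: coeff_depressed_poly)

section \<open>The two group actions\<close>

definition wscale :: "(nat \<Rightarrow> nat) \<Rightarrow> nat \<Rightarrow> complex \<Rightarrow> (nat \<Rightarrow> complex) \<Rightarrow> nat \<Rightarrow> complex" where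
  "wscale w N t a = restrict (\<lambda>k. t ^ w k * a k) {..<N}"

lemma wclass_eq: "wclass w N a = {wscale w N t a | t. t \<noteq> 0}"
  by (simp add: wclass_def wscale_def)

lemma wscale_wscale [simp]: "wscale w N s (wscale w N t a) = wscale w N (s * t) a"
  by (auto simp: wscale_def power_mult_distrib)

lemma wscale_1 [simp]: "a \<in> extensional {..<N} \<Longrightarrow> wscale w N 1 a = a"
  by (auto simp: wscale_def extensional_def)

lemma wscale_extensional [simp]: "wscale w N t a \<in> extensional {..<N}"
  by (simp add: wscale_def)

lemma wclass_wscale: "t \<noteq> 0 \<Longrightarrow> wclass w N (wscale w N t a) = wclass w N a"
  unfolding wclass_eq
proof safe
  fix s :: complex assume "t \<noteq> 0" "s \<noteq> 0"
  then show "\<exists>r. wscale w N s (wscale w N t a) = wscale w N r a \<and> r \<noteq> 0"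
    by auto
  have "wscale w N s a = wscale w N (s / t) (wscale w N t a)"
    using \<open>t \<noteq> 0\<close> by simp
  with \<open>t \<noteq> 0\<close> \<open>s \<noteq> 0\<close> show "\<exists>r. wscale w N s a = wscale w N r (wscale w N t a) \<and> r \<noteq> 0"
    by (intro exI[of _ "s / t"]) simp
qed

lemma wclass_eq_iff:
  assumes "b \<in> extensional {..<N}"
  shows "wclass w N a = wclass w N b \<longleftrightarrow> (\<exists>t. t \<noteq> 0 \<and> b = wscale w N t a)"
proof
  assume "wclass w N a = wclass w N b"
  moreover have "b \<in> wclass w N b"
    using assms unfolding wclass_eq by (auto intro!: exI[of _ 1])
  ultimately show "\<exists>t. t \<noteq> 0 \<and> b = wscale w N t a"
    unfolding wclass_eq by blast
qed (auto simp: wclass_wscale)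

lemma image_mset_affine_affine:
  "image_mset (\<lambda>x. l' * x + u') (image_mset (\<lambda>x. l * x + u) m)
     = image_mset (\<lambda>x. (l' * l) * x + (l' * u + u')) (m :: complex multiset)"
  by (simp add: image_mset.compositionality o_def algebra_simps)

lemma aff_orbit_affine_subset:
  "l \<noteq> 0 \<Longrightarrow> aff_orbit (image_mset (\<lambda>x. l * x + u) m) \<subseteq> aff_orbit m"
  unfolding aff_orbit_def image_mset_affine_affine by fastforce

lemma aff_orbit_affine:
  assumes "l \<noteq> 0"
  shows "aff_orbit (image_mset (\<lambda>x. l * x + u) m) = aff_orbit m"
proof
  have "(\<lambda>x. (1 / l * l) * x + (1 / l * u + - u / l)) = (\<lambda>x. x)"
    using assms by (auto simp: field_simps)
  then have "m = image_mset (\<lambda>x. (1 / l) * x + (- u / l)) (image_mset (\<lambda>x. l * x + u) m)"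
    by (simp only: image_mset_affine_affine) simp
  then show "aff_orbit m \<subseteq> aff_orbit (image_mset (\<lambda>x. l * x + u) m)"
    by (metis aff_orbit_affine_subset assms divide_eq_0_iff one_neq_zero)
qed (rule aff_orbit_affine_subset[OF assms])

lemma self_in_aff_orbit: "m \<in> aff_orbit m"
  unfolding aff_orbit_def by (rule CollectI, rule exI[of _ 1], rule exI[of _ 0]) simp

lemma aff_orbit_eq_iff:
  "aff_orbit m = aff_orbit m' \<longleftrightarrow> (\<exists>l u. l \<noteq> 0 \<and> m' = image_mset (\<lambda>x. l * x + u) m)"
proof
  assume "aff_orbit m = aff_orbit m'"
  with self_in_aff_orbit[of m'] have "m' \<in> aff_orbit m"
    by simp
  then show "\<exists>l u. l \<noteq> 0 \<and> m' = image_mset (\<lambda>x. l * x + u) m"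
    unfolding aff_orbit_def by blast
qed (auto simp: aff_orbit_affine)

section \<open>The centred polynomial and its coefficient vector\<close>

lemma sum_mset_affine:
  "sum_mset (image_mset (\<lambda>x. l * x + u) m) = l * sum_mset m + of_nat (size m) * (u :: complex)"
  by (induction m) (simp_all add: algebra_simps)

lemma bary_affine:
  "size m = n \<Longrightarrow> n > 0 \<Longrightarrow> bary n (image_mset (\<lambda>x. l * x + u) m) = l * bary n m + u"
  unfolding bary_def sum_mset_affine by (simp add: field_simps)

lemma sum_mset_centre:
  "size m = n \<Longrightarrow> n > 0 \<Longrightarrow> sum_mset (image_mset (\<lambda>x. x - bary n m) m) = 0"
  using sum_mset_affine[of 1 "- bary n m" m] by (simp add: bary_def)

lemma centred_poly_eq_poly_of_roots:
  "centred_poly n m = poly_of_roots (image_mset (\<lambda>x. x - bary n m) m)"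
  by (simp add: centred_poly_def poly_of_roots_def image_mset.compositionality o_def)

lemma centred_poly_eq_depressed_poly:
  assumes "size m = n" "n > 0"
  shows "centred_poly n m = depressed_poly n (coefvec n m)"
proof (rule poly_eqI)
  fix k
  define c where "c = image_mset (\<lambda>x. x - bary n m) m"
  have centred: "centred_poly n m = poly_of_roots c"
    by (simp add: centred_poly_eq_poly_of_roots c_def)
  have size_c: "size c = Suc (n - 1)"
    using assms by (simp add: c_def)
  have "coeff (poly_of_roots c) (n - 1) = 0"
    using coeff_poly_of_roots_pred[OF size_c] sum_mset_centre[OF assms] by (simp add: c_def)
  moreover have "coeff (poly_of_roots c) n = 1" "\<And>k. k > n \<Longrightarrow> coeff (poly_of_roots c) k = 0"
    using coeff_poly_of_roots_size[of c] assms by (simp_all add: c_def coeff_eq_0)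
  ultimately show "coeff (centred_poly n m) k = coeff (depressed_poly n (coefvec n m)) k"
    unfolding coeff_depressed_poly coefvec_def centred
    by (cases "k < n - 1"; cases "k = n - 1"; cases "k = n") auto
qed

lemma centred_poly_replicate: "n > 0 \<Longrightarrow> centred_poly n (replicate_mset n c) = monom 1 n"
  by (simp add: centred_poly_eq_poly_of_roots bary_def poly_of_roots_replicate_0)

lemma coefvec_affine:
  assumes "size m = n" "n > 0" "l \<noteq> 0"
  shows "coefvec n (image_mset (\<lambda>x. l * x + u) m) = wscale (\<lambda>k. n - k) (n - 1) l (coefvec n m)"
proof -
  have "image_mset (\<lambda>x. x - bary n (image_mset (\<lambda>x. l * x + u) m)) (image_mset (\<lambda>x. l * x + u) m)
      = image_mset ((*) l) (image_mset (\<lambda>x. x - bary n m) m)"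
    unfolding bary_affine[OF assms(1,2)] by (simp add: image_mset.compositionality o_def algebra_simps)
  then have "coeff (centred_poly n (image_mset (\<lambda>x. l * x + u) m)) k
      = l ^ (n - k) * coeff (centred_poly n m) k" if "k < n - 1" for k
    using that assms coeff_poly_of_roots_scale[of l k "image_mset (\<lambda>x. x - bary n m) m"]
    by (simp add: centred_poly_eq_poly_of_roots)
  then show ?thesis
    by (auto simp: coefvec_def wscale_def)
qed

lemma aff_orbit_eq_of_coefvec_eq:
  assumes "size m1 = n" "size m2 = n" "n > 0" and "coefvec n m1 = coefvec n m2"
  shows "aff_orbit m1 = aff_orbit m2"
proof -
  have "centred_poly n m1 = centred_poly n m2"
    using centred_poly_eq_depressed_poly[OF assms(1,3)] centred_poly_eq_depressed_poly[OF assms(2,3)]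
      assms(4) by simp
  then have "image_mset (\<lambda>x. x - bary n m1) m1 = image_mset (\<lambda>x. x - bary n m2) m2"
    unfolding centred_poly_eq_poly_of_roots by (metis proots_poly_of_roots)
  then have "image_mset (\<lambda>x. x + bary n m2) (image_mset (\<lambda>x. x - bary n m1) m1)
      = image_mset (\<lambda>x. x + bary n m2) (image_mset (\<lambda>x. x - bary n m2) m2)"
    by simp
  then have "m2 = image_mset (\<lambda>x. x + (bary n m2 - bary n m1)) m1"
    by (simp add: image_mset.compositionality o_def algebra_simps)
  then obtain u where "m2 = image_mset (\<lambda>x. x + u) m1"
    by blast
  then show ?thesis
    unfolding aff_orbit_eq_iff by (intro exI[of _ 1] exI[of _ u]) simp
qed

lemma wclass_coefvec_eq_iff:
  assumes "size m1 = n" "size m2 = n" "n > 0"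
  shows "wclass (\<lambda>k. n - k) (n - 1) (coefvec n m1) = wclass (\<lambda>k. n - k) (n - 1) (coefvec n m2)
           \<longleftrightarrow> aff_orbit m1 = aff_orbit m2"
proof
  assume "wclass (\<lambda>k. n - k) (n - 1) (coefvec n m1) = wclass (\<lambda>k. n - k) (n - 1) (coefvec n m2)"
  then obtain t where "t \<noteq> 0" and t: "coefvec n m2 = wscale (\<lambda>k. n - k) (n - 1) t (coefvec n m1)"
    by (auto simp: wclass_eq_iff coefvec_def)
  define m1' where "m1' = image_mset (\<lambda>x. t * x + 0) m1"
  have "coefvec n m1' = coefvec n m2"
    unfolding m1'_def coefvec_affine[OF assms(1,3) \<open>t \<noteq> 0\<close>] t ..
  then have "aff_orbit m1' = aff_orbit m2"
    using assms by (intro aff_orbit_eq_of_coefvec_eq) (simp_all add: m1'_def)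
  moreover have "aff_orbit m1' = aff_orbit m1"
    unfolding m1'_def by (rule aff_orbit_affine[OF \<open>t \<noteq> 0\<close>])
  ultimately show "aff_orbit m1 = aff_orbit m2"
    by simp
next
  assume "aff_orbit m1 = aff_orbit m2"
  then obtain l u where "l \<noteq> 0" "m2 = image_mset (\<lambda>x. l * x + u) m1"
    by (auto simp: aff_orbit_eq_iff)
  then show "wclass (\<lambda>k. n - k) (n - 1) (coefvec n m1) = wclass (\<lambda>k. n - k) (n - 1) (coefvec n m2)"
    using assms by (simp add: coefvec_affine wclass_wscale)
qed

lemma coefvec_eq_0_iff:
  assumes "size m = n" "n > 0"
  shows "coefvec n m = restrict (\<lambda>_. 0) {..<n - 1} \<longleftrightarrow> m \<in> diagonal n"
proof
  assume "coefvec n m = restrict (\<lambda>_. 0) {..<n - 1}"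
  then have "depressed_poly n (coefvec n m) = monom 1 n"
    by (simp add: depressed_poly_def)
  then have "poly_of_roots (image_mset (\<lambda>x. x - bary n m) m) = poly_of_roots (replicate_mset n 0)"
    using assms by (simp add: poly_of_roots_replicate_0 centred_poly_eq_depressed_poly
                         flip: centred_poly_eq_poly_of_roots)
  then have "image_mset (\<lambda>x. x - bary n m) m = replicate_mset n 0"
    by (metis proots_poly_of_roots)
  then have "image_mset (\<lambda>x. x + bary n m) (image_mset (\<lambda>x. x - bary n m) m)
      = image_mset (\<lambda>x. x + bary n m) (replicate_mset n 0)"
    by simp
  then have "m = replicate_mset n (bary n m)"
    by (simp add: image_mset.compositionality o_def)
  then show "m \<in> diagonal n"
    by (auto simp: diagonal_def)
next
  assume "m \<in> diagonal n"
  then obtain c where "m = replicate_mset n c"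
    by (auto simp: diagonal_def)
  then show "coefvec n m = restrict (\<lambda>_. 0) {..<n - 1}"
    using assms by (auto simp: coefvec_def centred_poly_replicate coeff_monom fun_eq_iff)
qed

lemma coefvec_surj:
  assumes "n > 0" "a \<in> extensional {..<n - 1}"
  obtains m where "size m = n" "coefvec n m = a"
proof -
  define p where "p = depressed_poly n a"
  have "lead_coeff p = 1"
    by (simp add: p_def coeff_depressed_poly)
  then have p: "poly_of_roots (proots p) = p"
    by (rule poly_of_roots_proots)
  have size: "size (proots p) = n"
    by (simp add: p_def size_proots_complex)
  have "- sum_mset (proots p) = coeff p (n - 1)"
    using coeff_poly_of_roots_pred[of "proots p" "n - 1"] size assms(1) p by simp
  also have "\<dots> = 0"
    using assms(1) by (simp add: p_def coeff_depressed_poly)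
  finally have "bary n (proots p) = 0"
    by (simp add: bary_def)
  then have "centred_poly n (proots p) = p"
    using p by (simp add: centred_poly_eq_poly_of_roots)
  then have "coefvec n (proots p) = a"
    using assms(2) by (auto simp: coefvec_def p_def coeff_depressed_poly extensional_def fun_eq_iff)
  with size show ?thesis
    by (rule that)
qed

section \<open>Quotient topologies and configuration spaces\<close>

lemma continuous_map_mult [continuous_intros]:
  fixes f g :: "'a \<Rightarrow> 'b::real_normed_algebra"
  shows "continuous_map X euclidean f \<Longrightarrow> continuous_map X euclidean g
           \<Longrightarrow> continuous_map X euclidean (\<lambda>x. f x * g x)"
  by (simp add: continuous_map_atin tendsto_mult)

lemma continuous_map_coeff_mult:
  fixes p q :: "'a \<Rightarrow> 'b::real_normed_field poly"
  assumes "\<And>k. continuous_map X euclidean (\<lambda>x. coeff (p x) k)"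
    and "\<And>k. continuous_map X euclidean (\<lambda>x. coeff (q x) k)"
  shows "continuous_map X euclidean (\<lambda>x. coeff (p x * q x) k)"
  unfolding coeff_mult by (intro continuous_map_sum continuous_map_mult assms) auto

lemma continuous_map_coeff_prod:
  fixes p :: "'i \<Rightarrow> 'a \<Rightarrow> 'b::real_normed_field poly"
  assumes "finite I" "\<And>i k. i \<in> I \<Longrightarrow> continuous_map X euclidean (\<lambda>x. coeff (p i x) k)"
  shows "continuous_map X euclidean (\<lambda>x. coeff (\<Prod>i\<in>I. p i x) k)"
  using assms
proof (induction I arbitrary: k rule: finite_induct)
  case (insert i I)
  have "continuous_map X euclidean (\<lambda>x. coeff (p i x * (\<Prod>i\<in>I. p i x)) k)"
    using insert by (intro continuous_map_coeff_mult) auto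
  with insert.hyps show ?case
    by simp
qed simp

lemma continuous_map_coeff_linear_factor:
  fixes c :: "'a \<Rightarrow> 'b::real_normed_field"
  shows "continuous_map X euclidean c \<Longrightarrow> continuous_map X euclidean (\<lambda>x. coeff [:c x, 1:] k)"
  by (cases k) simp_all

lemma continuous_map_power [continuous_intros]:
  fixes f :: "'a \<Rightarrow> 'b::{power, real_normed_algebra}"
  shows "continuous_map X euclidean f \<Longrightarrow> continuous_map X euclidean (\<lambda>x. f x ^ n)"
  by (simp add: continuous_map_atin tendsto_power)

lemma continuous_map_of_real [continuous_intros]:
  "continuous_map X euclidean f \<Longrightarrow> continuous_map X euclidean (\<lambda>x. of_real (f x) :: 'b::real_normed_algebra_1)"
  by (simp add: continuous_map_atin tendsto_of_real)

lemma continuous_map_root [continuous_intros]: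
  "continuous_map X euclidean f \<Longrightarrow> continuous_map X euclidean (\<lambda>x. root n (f x))"
  by (simp add: continuous_map_atin tendsto_real_root)

lemma topspace_quotient_topology [simp]: "topspace (quotient_topology X f) = f ` topspace X"
proof (rule antisym)
  show "topspace (quotient_topology X f) \<subseteq> f ` topspace X"
    by (metis openin_quotient_topology openin_topspace)
  have "{x \<in> topspace X. f x \<in> f ` topspace X} = topspace X"
    by blast
  then have "openin (quotient_topology X f) (f ` topspace X)"
    by (simp add: openin_quotient_topology)
  then show "f ` topspace X \<subseteq> topspace (quotient_topology X f)"
    by (rule openin_subset)
qed

lemma quotient_map_quotient_topology: "quotient_map X (quotient_topology X f) f"
  by (auto simp: quotient_map_def openin_quotient_topology)

lemma topspace_Cn: "topspace (Cn n) = PiE {..<n} (\<lambda>_. UNIV)"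
  by (simp add: Cn_def)

lemma continuous_map_Cn_component: "i < n \<Longrightarrow> continuous_map (Cn n) euclidean (\<lambda>z. z i)"
  unfolding Cn_def using continuous_map_product_projection[of i "{..<n}" "\<lambda>_. euclidean"] by simp

lemma size_mset_of [simp]: "size (mset_of n z) = n"
  by (simp add: mset_of_def)

lemma mset_of_restrict: "mset_of n (restrict z {..<n}) = mset_of n z"
  unfolding mset_of_def by (intro arg_cong[where f = mset] map_cong) auto

lemma mset_of_affine: "mset_of n (\<lambda>i. l * z i + u) = image_mset (\<lambda>x. l * x + u) (mset_of n z)"
  unfolding mset_of_def by (simp only: mset_map[symmetric] map_map o_def)

lemma mset_of_eq_replicate_iff: "mset_of n z = replicate_mset n c \<longleftrightarrow> (\<forall>i<n. z i = c)"
proof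
  assume eq: "mset_of n z = replicate_mset n c"
  show "\<forall>i<n. z i = c"
  proof (intro allI impI)
    fix i assume "i < n"
    then have "z i \<in># mset_of n z"
      by (simp add: mset_of_def)
    with eq \<open>i < n\<close> show "z i = c"
      by (simp split: if_splits)
  qed
next
  assume "\<forall>i<n. z i = c"
  then have "map z [0..<n] = replicate n c"
    by (intro nth_equalityI) auto
  then show "mset_of n z = replicate_mset n c"
    by (simp add: mset_of_def)
qed

lemma centred_poly_mset_of:
  "centred_poly n (mset_of n z) = (\<Prod>i<n. [:(\<Sum>j<n. z j) / of_nat n - z i, 1:])"
proof -
  have "mset_of n z = image_mset z (mset_set {..<n})"
    by (simp add: mset_of_def mset_map mset_upt atLeast0LessThan)
  then show ?thesis
    unfolding centred_poly_def bary_def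
    by (simp add: prod_unfold_prod_mset sum_unfold_sum_mset image_mset.compositionality o_def)
qed

lemma quotient_map_mset_of: "quotient_map (Cn n) (SP n) (mset_of n)"
  by (simp add: SP_def quotient_map_quotient_topology)

lemma topspace_SP: "topspace (SP n) = {M. size M = n}"
proof (intro antisym subsetI)
  fix M assume "M \<in> topspace (SP n)"
  then show "M \<in> {M. size M = n}"
    by (auto simp: SP_def)
next
  fix M :: "complex multiset" assume "M \<in> {M. size M = n}"
  then obtain xs where xs: "mset xs = M" "length xs = n"
    by (metis ex_mset mem_Collect_eq size_mset)
  have "map (restrict (\<lambda>i. xs ! i) {..<n}) [0..<n] = xs"
    using xs(2) by (intro nth_equalityI) auto
  then have "mset_of n (restrict (\<lambda>i. xs ! i) {..<n}) = M"
    by (simp add: mset_of_def xs(1))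
  then show "M \<in> topspace (SP n)"
    by (force simp: SP_def topspace_Cn)
qed

lemma topspace_SP_minus_diag: "topspace (SP_minus_diag n) = {M. size M = n} - diagonal n"
  by (auto simp: SP_minus_diag_def topspace_SP)

lemma quotient_map_aff_orbit: "quotient_map (SP_minus_diag n) (SP_orbits n) aff_orbit"
  by (simp add: SP_orbits_def quotient_map_quotient_topology)

definition Cn_nonzero :: "nat \<Rightarrow> (nat \<Rightarrow> complex) topology" where
  "Cn_nonzero N = subtopology (Cn N) (topspace (Cn N) - {restrict (\<lambda>_. 0) {..<N}})"

lemma topspace_Cn_nonzero:
  "topspace (Cn_nonzero N) = PiE {..<N} (\<lambda>_. UNIV) - {restrict (\<lambda>_. 0) {..<N}}"
  by (auto simp: Cn_nonzero_def topspace_Cn)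

lemma quotient_map_wclass: "quotient_map (Cn_nonzero N) (wproj w N) (wclass w N)"
  by (simp add: wproj_def Cn_nonzero_def quotient_map_quotient_topology)

section \<open>The map to weighted projective space\<close>

lemma continuous_map_coefvec: "continuous_map (SP n) (Cn (n - 1)) (coefvec n)"
proof (rule continuous_compose_quotient_map[OF quotient_map_mset_of])
  show "continuous_map (Cn n) (Cn (n - 1)) (coefvec n \<circ> mset_of n)"
    unfolding Cn_def[of "n - 1"] continuous_map_componentwise
  proof (intro conjI ballI)
    show "(coefvec n \<circ> mset_of n) ` topspace (Cn n) \<subseteq> extensional {..<n - 1}"
      by (auto simp: coefvec_def)
    fix k assume k: "k \<in> {..<n - 1}"
    have "continuous_map (Cn n) euclidean (\<lambda>z. (\<Sum>j<n. z j) * inverse (of_nat n) - z i)" if "i < n" for i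
      using that by (intro continuous_map_diff continuous_map_mult continuous_map_sum
          continuous_map_Cn_component) auto
    then have "continuous_map (Cn n) euclidean
        (\<lambda>z. coeff (\<Prod>i<n. [:(\<Sum>j<n. z j) * inverse (of_nat n) - z i, 1:]) k)"
      by (intro continuous_map_coeff_prod continuous_map_coeff_linear_factor) auto
    then show "continuous_map (Cn n) euclidean (\<lambda>z. (coefvec n \<circ> mset_of n) z k)"
      using k by (simp add: coefvec_def centred_poly_mset_of divide_inverse)
  qed
qed

lemma coefvec_image_SP_minus_diag:
  assumes "n > 0"
  shows "coefvec n ` topspace (SP_minus_diag n) = topspace (Cn_nonzero (n - 1))"
proof (intro antisym subsetI)
  fix a assume "a \<in> coefvec n ` topspace (SP_minus_diag n)"
  with assms coefvec_eq_0_iff show "a \<in> topspace (Cn_nonzero (n - 1))"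
    by (force simp: topspace_SP_minus_diag topspace_Cn_nonzero coefvec_def)
next
  fix a assume a: "a \<in> topspace (Cn_nonzero (n - 1))"
  then have "a \<in> extensional {..<n - 1}"
    by (simp add: topspace_Cn_nonzero PiE_def)
  then obtain m where m: "size m = n" "coefvec n m = a"
    by (rule coefvec_surj[OF assms])
  with a assms coefvec_eq_0_iff have "m \<notin> diagonal n"
    by (auto simp: topspace_Cn_nonzero)
  with m show "a \<in> coefvec n ` topspace (SP_minus_diag n)"
    by (auto simp: topspace_SP_minus_diag)
qed

lemma continuous_map_wclass_coefvec:
  assumes "n > 0"
  shows "continuous_map (SP_minus_diag n) (wproj (\<lambda>k. n - k) (n - 1))
           (\<lambda>m. wclass (\<lambda>k. n - k) (n - 1) (coefvec n m))"
proof -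
  have "continuous_map (SP_minus_diag n) (Cn_nonzero (n - 1)) (coefvec n)"
    unfolding Cn_nonzero_def
  proof (rule continuous_map_into_subtopology)
    show "continuous_map (SP_minus_diag n) (Cn (n - 1)) (coefvec n)"
      unfolding SP_minus_diag_def by (rule continuous_map_from_subtopology[OF continuous_map_coefvec])
    show "coefvec n \<in> topspace (SP_minus_diag n) \<rightarrow> topspace (Cn (n - 1)) - {restrict (\<lambda>_. 0) {..<n - 1}}"
      using coefvec_image_SP_minus_diag[OF assms] by (auto simp: topspace_Cn_nonzero topspace_Cn)
  qed
  from continuous_map_compose[OF this quotient_imp_continuous_map[OF quotient_map_wclass]]
  show ?thesis
    by (simp add: o_def)
qed

section \<open>Compactness of the orbit space\<close>

definition normal_slice :: "nat \<Rightarrow> (nat \<Rightarrow> complex) set" where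
  "normal_slice n = {z \<in> topspace (Cn n). z 0 = 0 \<and> (\<Sum>i<n. cmod (z i)) = 1}"

lemma compactin_normal_slice:
  assumes "n > 0"
  shows "compactin (Cn n) (normal_slice n)"
proof (rule closed_compactin)
  show "compactin (Cn n) (PiE {..<n} (\<lambda>_. cball 0 1))"
    unfolding Cn_def compactin_PiE by simp
  show "normal_slice n \<subseteq> PiE {..<n} (\<lambda>_. cball 0 1)"
  proof
    fix z assume z: "z \<in> normal_slice n"
    have "cmod (z i) \<le> 1" if "i < n" for i
      using z that member_le_sum[of i "{..<n}" "\<lambda>i. cmod (z i)"] by (simp add: normal_slice_def)
    with z show "z \<in> PiE {..<n} (\<lambda>_. cball 0 1)"
      by (simp add: normal_slice_def topspace_Cn PiE_iff)
  qed
  have c0: "closedin (Cn n) {z \<in> topspace (Cn n). z 0 \<in> {0}}"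
    using assms by (intro closedin_continuous_map_preimage[where Y = euclidean]
        continuous_map_Cn_component) auto
  have c1: "closedin (Cn n) {z \<in> topspace (Cn n). (\<Sum>i<n. cmod (z i)) \<in> {1}}"
    by (intro closedin_continuous_map_preimage[where Y = euclidean] continuous_map_sum
        continuous_map_norm continuous_map_Cn_component) auto
  have "normal_slice n = {z \<in> topspace (Cn n). z 0 \<in> {0}} \<inter> {z \<in> topspace (Cn n). (\<Sum>i<n. cmod (z i)) \<in> {1}}"
    by (auto simp: normal_slice_def)
  with closedin_Int[OF c0 c1] show "closedin (Cn n) (normal_slice n)"
    by simp
qed

lemma mset_of_normal_slice_notin_diagonal:
  assumes "z \<in> normal_slice n"
  shows "mset_of n z \<notin> diagonal n"
proof
  assume "mset_of n z \<in> diagonal n"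
  then obtain c where "\<forall>i<n. z i = c"
    by (auto simp: diagonal_def mset_of_eq_replicate_iff)
  moreover have "n > 0"
    using assms by (auto simp: normal_slice_def intro: ccontr)
  ultimately have "\<forall>i<n. z i = 0"
    using assms by (auto simp: normal_slice_def)
  then show False
    using assms by (simp add: normal_slice_def)
qed

lemma aff_orbit_meets_normal_slice:
  assumes "m \<in> topspace (SP_minus_diag n)"
  obtains z where "z \<in> normal_slice n" "aff_orbit (mset_of n z) = aff_orbit m"
proof -
  obtain z where z: "z \<in> topspace (Cn n)" "m = mset_of n z"
    using assms by (auto simp: SP_minus_diag_def SP_def)
  moreover have "m \<notin> diagonal n"
    using assms by (simp add: topspace_SP_minus_diag)
  ultimately obtain i where i: "i < n" "z i \<noteq> z 0"
    by (auto simp: diagonal_def mset_of_eq_replicate_iff)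
  define s where "s = (\<Sum>j<n. cmod (z j - z 0))"
  have "0 < cmod (z i - z 0)"
    using i by simp
  also have "\<dots> \<le> s"
    unfolding s_def using i by (intro member_le_sum) auto
  finally have "s > 0" .
  define z' where "z' = restrict (\<lambda>j. (1 / of_real s) * z j + (- z 0 / of_real s)) {..<n}"
  have "aff_orbit (mset_of n z') = aff_orbit m"
    unfolding z'_def mset_of_restrict mset_of_affine z(2) using \<open>s > 0\<close> by (intro aff_orbit_affine) simp
  moreover have "z' \<in> normal_slice n"
  proof -
    have z': "z' j = (z j - z 0) / of_real s" if "j < n" for j
      using that by (simp add: z'_def diff_divide_distrib)
    have "(\<Sum>j<n. cmod (z' j)) = (\<Sum>j<n. cmod (z j - z 0) / s)"
      using \<open>s > 0\<close> by (intro sum.cong) (simp_all add: z' norm_divide)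
    also have "\<dots> = 1"
      using \<open>s > 0\<close> by (simp add: s_def flip: sum_divide_distrib)
    finally show ?thesis
      using i z' by (simp add: normal_slice_def topspace_Cn z'_def)
  qed
  ultimately show ?thesis
    by (rule that[rotated])
qed

lemma compact_space_SP_orbits:
  assumes "n > 0"
  shows "compact_space (SP_orbits n)"
proof -
  have "continuous_map (subtopology (Cn n) (normal_slice n)) (SP_minus_diag n) (mset_of n)"
    unfolding SP_minus_diag_def
    using mset_of_normal_slice_notin_diagonal quotient_imp_continuous_map[OF quotient_map_mset_of]
    by (intro continuous_map_into_subtopology continuous_map_from_subtopology)
       (auto simp: topspace_SP)
  then have cont: "continuous_map (subtopology (Cn n) (normal_slice n)) (SP_orbits n) (aff_orbit \<circ> mset_of n)"
    using continuous_map_compose quotient_imp_continuous_map[OF quotient_map_aff_orbit] by blast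
  have "compactin (SP_orbits n) ((aff_orbit \<circ> mset_of n) ` normal_slice n)"
    using compactin_normal_slice[OF assms]
    by (intro image_compactin[OF _ cont]) (simp add: compactin_subtopology)
  moreover have "(aff_orbit \<circ> mset_of n) ` normal_slice n = topspace (SP_orbits n)"
  proof (intro antisym subsetI)
    fix Z assume "Z \<in> (aff_orbit \<circ> mset_of n) ` normal_slice n"
    with cont show "Z \<in> topspace (SP_orbits n)"
      by (auto dest!: continuous_map_image_subset_topspace simp: normal_slice_def)
  next
    fix Z assume "Z \<in> topspace (SP_orbits n)"
    then obtain m where "m \<in> topspace (SP_minus_diag n)" "Z = aff_orbit m"
      by (auto simp: SP_orbits_def)
    then show "Z \<in> (aff_orbit \<circ> mset_of n) ` normal_slice n"
      by (metis aff_orbit_meets_normal_slice comp_apply image_eqI)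
  qed
  ultimately show ?thesis
    by (simp add: compact_space_def)
qed

section \<open>Weighted projective space is Hausdorff\<close>

text \<open>The weighted norm is homogeneous of degree one under \<^const>\<open>wscale\<close>; normalising by it
  leaves only the action of the unit circle, which is compact.\<close>

definition wnorm :: "(nat \<Rightarrow> nat) \<Rightarrow> nat \<Rightarrow> (nat \<Rightarrow> complex) \<Rightarrow> real" where
  "wnorm w N a = (\<Sum>k<N. root (w k) (cmod (a k)))"

definition wnormalize :: "(nat \<Rightarrow> nat) \<Rightarrow> nat \<Rightarrow> (nat \<Rightarrow> complex) \<Rightarrow> nat \<Rightarrow> complex" where
  "wnormalize w N a = wscale w N (of_real (1 / wnorm w N a)) a"

definition l1_dist :: "nat \<Rightarrow> (nat \<Rightarrow> complex) \<Rightarrow> (nat \<Rightarrow> complex) \<Rightarrow> real" where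
  "l1_dist N a b = (\<Sum>k<N. cmod (a k - b k))"

lemma Cn_nonzero_component_nonzero:
  assumes a: "a \<in> topspace (Cn_nonzero N)"
  obtains k where "k < N" "a k \<noteq> 0"
proof (rule ccontr)
  assume "\<not> thesis"
  with that have "a = restrict (\<lambda>_. 0) {..<N}"
    using a by (intro extensionalityI[of _ "{..<N}"]) (auto simp: topspace_Cn_nonzero PiE_iff)
  with a show False
    by (simp add: topspace_Cn_nonzero)
qed

lemma wnorm_pos:
  assumes "\<forall>k<N. w k > 0" and a: "a \<in> topspace (Cn_nonzero N)"
  shows "wnorm w N a > 0"
proof -
  obtain k where k: "k < N" "a k \<noteq> 0"
    using Cn_nonzero_component_nonzero[OF a] .
  show ?thesis
    unfolding wnorm_def
    using assms k by (intro sum_pos2[of _ k]) auto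
qed

lemma wnorm_wscale:
  assumes "\<forall>k<N. w k > 0"
  shows "wnorm w N (wscale w N t a) = cmod t * wnorm w N a"
  unfolding wnorm_def sum_distrib_left
proof (rule sum.cong)
  fix k assume "k \<in> {..<N}"
  with assms show "root (w k) (cmod (wscale w N t a k)) = cmod t * root (w k) (cmod (a k))"
    by (simp add: wscale_def norm_mult norm_power real_root_mult real_root_power_cancel)
qed simp

lemma wnormalize_wscale:
  assumes wpos: "\<forall>k<N. w k > 0"
    and a: "a \<in> topspace (Cn_nonzero N)" and "t \<noteq> 0"
  shows "wnormalize w N (wscale w N t a) = wscale w N (t / of_real (cmod t)) (wnormalize w N a)"
proof -
  have "of_real (1 / (cmod t * wnorm w N a)) * t = t / of_real (cmod t) * of_real (1 / wnorm w N a)"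
    using wnorm_pos[OF wpos a] \<open>t \<noteq> 0\<close> by (simp add: field_simps)
  then show ?thesis
    by (simp add: wnormalize_def wnorm_wscale[OF wpos])
qed

lemma wclass_wnormalize:
  assumes "\<forall>k<N. w k > 0" and "a \<in> topspace (Cn_nonzero N)"
  shows "wclass w N (wnormalize w N a) = wclass w N a"
  using wnorm_pos[OF assms] by (simp add: wnormalize_def wclass_wscale)

lemma l1_dist_self [simp]: "l1_dist N a a = 0"
  by (simp add: l1_dist_def)

lemma l1_dist_commute: "l1_dist N a b = l1_dist N b a"
  by (simp add: l1_dist_def norm_minus_commute)

lemma l1_dist_triangle: "l1_dist N a c \<le> l1_dist N a b + l1_dist N b c"
  unfolding l1_dist_def sum.distrib[symmetric]
proof (rule sum_mono)
  fix k
  show "cmod (a k - c k) \<le> cmod (a k - b k) + cmod (b k - c k)"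
    using norm_triangle_ineq[of "a k - b k" "b k - c k"] by simp
qed

lemma l1_dist_pos:
  assumes "a \<in> extensional {..<N}" "b \<in> extensional {..<N}" "a \<noteq> b"
  shows "l1_dist N a b > 0"
proof -
  have "\<exists>k<N. a k \<noteq> b k"
  proof (rule ccontr)
    assume "\<not> (\<exists>k<N. a k \<noteq> b k)"
    then have "a = b"
      using assms(1,2) by (intro extensionalityI[of _ "{..<N}"]) auto
    with assms(3) show False ..
  qed
  then obtain k where k: "k < N" "a k \<noteq> b k"
    by blast
  then show ?thesis
    unfolding l1_dist_def by (intro sum_pos2[of _ k]) auto
qed

lemma l1_dist_wscale_unit:
  assumes "cmod u = 1"
  shows "l1_dist N (wscale w N u a) (wscale w N u b) = l1_dist N a b"
  unfolding l1_dist_def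
proof (rule sum.cong)
  fix k assume "k \<in> {..<N}"
  then have "wscale w N u a k - wscale w N u b k = u ^ w k * (a k - b k)"
    by (simp add: wscale_def algebra_simps)
  with assms show "cmod (wscale w N u a k - wscale w N u b k) = cmod (a k - b k)"
    by (simp add: norm_mult norm_power)
qed simp

lemma continuous_map_Cn_nonzero_component:
  "k < N \<Longrightarrow> continuous_map (Cn_nonzero N) euclidean (\<lambda>a. a k)"
  unfolding Cn_nonzero_def by (rule continuous_map_from_subtopology[OF continuous_map_Cn_component])

lemma continuous_map_wnormalize_component:
  assumes wpos: "\<forall>k<N. w k > 0" and "k < N"
  shows "continuous_map (Cn_nonzero N) euclidean (\<lambda>a. wnormalize w N a k)"
proof -
  have "continuous_map (Cn_nonzero N) euclidean (wnorm w N)"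
    unfolding wnorm_def
    by (intro continuous_map_sum continuous_map_root continuous_map_norm
        continuous_map_Cn_nonzero_component) auto
  then have "continuous_map (Cn_nonzero N) euclidean (\<lambda>a. of_real (1 / wnorm w N a) ^ w k * a k)"
    using wnorm_pos[OF wpos] \<open>k < N\<close> less_irrefl
    by (intro continuous_map_mult continuous_map_power continuous_map_of_real
        continuous_map_real_divide continuous_map_Cn_nonzero_component) fastforce+
  with \<open>k < N\<close> show ?thesis
    by (simp add: wnormalize_def wscale_def)
qed

lemma continuous_map_l1_dist_wnormalize:
  assumes "\<forall>k<N. w k > 0"
  shows "continuous_map (Cn_nonzero N) euclidean (\<lambda>a. l1_dist N (wnormalize w N a) b)"
  unfolding l1_dist_def
  by (intro continuous_map_sum continuous_map_norm continuous_map_diff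
      continuous_map_wnormalize_component assms) auto

lemma wscale_in_Cn_nonzero:
  assumes a: "a \<in> topspace (Cn_nonzero N)" and "t \<noteq> 0"
  shows "wscale w N t a \<in> topspace (Cn_nonzero N)"
proof -
  have "wscale w N t a \<noteq> restrict (\<lambda>_. 0) {..<N}"
  proof
    assume "wscale w N t a = restrict (\<lambda>_. 0) {..<N}"
    then have "wscale w N (1 / t) (wscale w N t a) = restrict (\<lambda>_. 0) {..<N}"
      by (auto simp: wscale_def)
    with a \<open>t \<noteq> 0\<close> show False
      by (simp add: topspace_Cn_nonzero PiE_def)
  qed
  then show ?thesis
    by (simp add: topspace_Cn_nonzero wscale_def)
qed

lemma continuous_map_wscale:
  assumes "t \<noteq> 0"
  shows "continuous_map (Cn_nonzero N) (Cn_nonzero N) (wscale w N t)"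
proof -
  have "continuous_map (Cn_nonzero N) (Cn N) (wscale w N t)"
    unfolding Cn_def continuous_map_componentwise
  proof (intro conjI ballI)
    fix k assume k: "k \<in> {..<N}"
    have "continuous_map (Cn_nonzero N) euclidean (\<lambda>a. t ^ w k * a k)"
      using k by (intro continuous_map_mult continuous_map_Cn_nonzero_component) auto
    with k show "continuous_map (Cn_nonzero N) euclidean (\<lambda>a. wscale w N t a k)"
      by (simp add: wscale_def)
  qed auto
  then show ?thesis
    unfolding Cn_nonzero_def[of N]
    using wscale_in_Cn_nonzero[OF _ assms] by (intro continuous_map_into_subtopology)
      (auto simp: Cn_nonzero_def)
qed

lemma open_map_wclass: "open_map (Cn_nonzero N) (wproj w N) (wclass w N)"
  unfolding open_map_def
proof (intro allI impI)
  fix U assume U: "openin (Cn_nonzero N) U"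
  have "{a \<in> topspace (Cn_nonzero N). wclass w N a \<in> wclass w N ` U}
      = (\<Union>t\<in>-{0}. {a \<in> topspace (Cn_nonzero N). wscale w N t a \<in> U})"
  proof (intro set_eqI iffI)
    fix a assume "a \<in> {a \<in> topspace (Cn_nonzero N). wclass w N a \<in> wclass w N ` U}"
    then obtain b where a: "a \<in> topspace (Cn_nonzero N)" and b: "b \<in> U" "wclass w N a = wclass w N b"
      by blast
    moreover have "b \<in> extensional {..<N}"
      using b openin_subset[OF U] by (auto simp: topspace_Cn_nonzero PiE_def)
    ultimately show "a \<in> (\<Union>t\<in>-{0}. {a \<in> topspace (Cn_nonzero N). wscale w N t a \<in> U})"
      by (auto simp: wclass_eq_iff)
  next
    fix a assume "a \<in> (\<Union>t\<in>-{0}. {a \<in> topspace (Cn_nonzero N). wscale w N t a \<in> U})"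
    then obtain t where "t \<noteq> 0" "a \<in> topspace (Cn_nonzero N)" "wscale w N t a \<in> U"
      by blast
    moreover have "wclass w N a = wclass w N (wscale w N t a)"
      using wclass_wscale[OF \<open>t \<noteq> 0\<close>] by simp
    ultimately show "a \<in> {a \<in> topspace (Cn_nonzero N). wclass w N a \<in> wclass w N ` U}"
      by blast
  qed
  moreover have "openin (Cn_nonzero N) (\<Union>t\<in>-{0}. {a \<in> topspace (Cn_nonzero N). wscale w N t a \<in> U})"
    using U by (intro openin_Union) (auto intro: openin_continuous_map_preimage[OF continuous_map_wscale])
  moreover have "wclass w N ` U \<subseteq> wclass w N ` topspace (Cn_nonzero N)"
    using openin_subset[OF U] by blast
  ultimately show "openin (wproj w N) (wclass w N ` U)"
    unfolding wproj_def openin_quotient_topology Cn_nonzero_def[symmetric] by simp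
qed

lemma wclass_separation:
  assumes wpos: "\<forall>k<N. w k > 0"
    and a: "a \<in> topspace (Cn_nonzero N)" and b: "b \<in> topspace (Cn_nonzero N)"
    and ne: "wclass w N a \<noteq> wclass w N b"
  obtains \<delta> where "\<delta> > 0"
    "\<And>u. cmod u = 1 \<Longrightarrow> \<delta> \<le> l1_dist N (wscale w N u (wnormalize w N a)) (wnormalize w N b)"
proof -
  define f where "f u = l1_dist N (wscale w N u (wnormalize w N a)) (wnormalize w N b)" for u
  have f_eq: "f = (\<lambda>u. \<Sum>k<N. cmod (u ^ w k * wnormalize w N a k - wnormalize w N b k))"
    by (auto simp: fun_eq_iff f_def l1_dist_def wscale_def intro!: sum.cong)
  have cont: "continuous_on (sphere 0 1) f"
    unfolding f_eq by (intro continuous_intros)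
  have "sphere (0::complex) 1 \<noteq> {}"
    using norm_one by (metis empty_iff mem_sphere_0)
  then obtain u0 where u0: "u0 \<in> sphere 0 1" and min: "\<And>u. u \<in> sphere 0 1 \<Longrightarrow> f u0 \<le> f u"
    using continuous_attains_inf[OF compact_sphere _ cont] by blast
  have "wscale w N u0 (wnormalize w N a) \<noteq> wnormalize w N b"
  proof
    assume eq: "wscale w N u0 (wnormalize w N a) = wnormalize w N b"
    have "u0 \<noteq> 0"
      using u0 by auto
    from wclass_wscale[OF this, of w N "wnormalize w N a"]
    have "wclass w N (wnormalize w N a) = wclass w N (wnormalize w N b)"
      by (simp add: eq)
    with ne show False
      using wclass_wnormalize[OF wpos] a b by simp
  qed
  then have "f u0 > 0"
    unfolding f_def by (intro l1_dist_pos) (simp_all add: wnormalize_def)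
  with min show ?thesis
    by (intro that[of "f u0"]) (auto simp: f_def)
qed

lemma wclass_ne_of_separation:
  assumes wpos: "\<forall>k<N. w k > 0"
    and x: "x \<in> topspace (Cn_nonzero N)" and y: "y \<in> topspace (Cn_nonzero N)"
    and \<delta>: "\<And>u. cmod u = 1 \<Longrightarrow> \<delta> \<le> l1_dist N (wscale w N u (wnormalize w N a)) (wnormalize w N b)"
    and near: "l1_dist N (wnormalize w N a) (wnormalize w N x)
                 + l1_dist N (wnormalize w N y) (wnormalize w N b) < \<delta>"
  shows "wclass w N x \<noteq> wclass w N y"
proof
  assume "wclass w N x = wclass w N y"
  with y obtain t where "t \<noteq> 0" and y_eq: "y = wscale w N t x"
    by (auto simp: wclass_eq_iff topspace_Cn_nonzero PiE_def)
  define u where "u = t / of_real (cmod t)"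
  have u: "cmod u = 1"
    using \<open>t \<noteq> 0\<close> by (simp add: u_def norm_divide)
  have y_norm: "wnormalize w N y = wscale w N u (wnormalize w N x)"
    unfolding y_eq u_def by (rule wnormalize_wscale[OF wpos x \<open>t \<noteq> 0\<close>])
  have "\<delta> \<le> l1_dist N (wscale w N u (wnormalize w N a)) (wnormalize w N b)"
    using \<delta>[OF u] .
  also have "\<dots> \<le> l1_dist N (wscale w N u (wnormalize w N a)) (wscale w N u (wnormalize w N x))
                 + l1_dist N (wscale w N u (wnormalize w N x)) (wnormalize w N b)"
    by (rule l1_dist_triangle)
  also have "\<dots> < \<delta>"
    using near by (simp add: l1_dist_wscale_unit[OF u] y_norm)
  finally show False
    by simp
qed

lemma Hausdorff_space_wproj:
  assumes wpos: "\<forall>k<N. w k > 0"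
  shows "Hausdorff_space (wproj w N)"
  unfolding Hausdorff_space_def
proof (intro allI impI, elim conjE)
  fix p q assume p: "p \<in> topspace (wproj w N)" and q: "q \<in> topspace (wproj w N)" and "p \<noteq> q"
  have top: "topspace (wproj w N) = wclass w N ` topspace (Cn_nonzero N)"
    using quotient_imp_surjective_map[OF quotient_map_wclass] by simp
  from p q obtain a b where a: "a \<in> topspace (Cn_nonzero N)" "p = wclass w N a"
    and b: "b \<in> topspace (Cn_nonzero N)" "q = wclass w N b"
    unfolding top by blast
  with \<open>p \<noteq> q\<close> obtain \<delta> where "\<delta> > 0"
    and \<delta>: "\<And>u. cmod u = 1 \<Longrightarrow> \<delta> \<le> l1_dist N (wscale w N u (wnormalize w N a)) (wnormalize w N b)"
    using wclass_separation[OF wpos a(1) b(1)] by blast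
  define U where "U = {x \<in> topspace (Cn_nonzero N). l1_dist N (wnormalize w N x) (wnormalize w N a) \<in> {..<\<delta>/2}}"
  define V where "V = {y \<in> topspace (Cn_nonzero N). l1_dist N (wnormalize w N y) (wnormalize w N b) \<in> {..<\<delta>/2}}"
  have "openin (Cn_nonzero N) U" "openin (Cn_nonzero N) V"
    unfolding U_def V_def
    by (intro openin_continuous_map_preimage[OF continuous_map_l1_dist_wnormalize[OF wpos]]; simp)+
  moreover have "a \<in> U" "b \<in> V"
    using a b \<open>\<delta> > 0\<close> by (simp_all add: U_def V_def)
  moreover have "wclass w N x \<noteq> wclass w N y" if "x \<in> U" "y \<in> V" for x y
    using that by (intro wclass_ne_of_separation[OF wpos _ _ \<delta>]) (auto simp: U_def V_def l1_dist_commute)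
  then have "disjnt (wclass w N ` U) (wclass w N ` V)"
    by (auto simp: disjnt_iff)
  ultimately show "\<exists>U V. openin (wproj w N) U \<and> openin (wproj w N) V \<and> p \<in> U \<and> q \<in> V \<and> disjnt U V"
    using open_map_wclass[unfolded open_map_def] a b by blast
qed

section \<open>The homeomorphism\<close>

lemma orbit_map_exists:
  assumes "n > 0"
  obtains \<psi> where "continuous_map (SP_orbits n) (wproj (\<lambda>k. n - k) (n - 1)) \<psi>"
    "\<psi> ` topspace (SP_orbits n) = topspace (wproj (\<lambda>k. n - k) (n - 1))"
    "\<And>m. m \<in> topspace (SP_minus_diag n) \<Longrightarrow> \<psi> (aff_orbit m) = wclass (\<lambda>k. n - k) (n - 1) (coefvec n m)"
proof -
  let ?h = "\<lambda>m. wclass (\<lambda>k. n - k) (n - 1) (coefvec n m)"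
  have well_defined: "?h m1 = ?h m2"
    if "m1 \<in> topspace (SP_minus_diag n)" "m2 \<in> topspace (SP_minus_diag n)" "aff_orbit m1 = aff_orbit m2"
    for m1 m2
    using that wclass_coefvec_eq_iff[OF _ _ assms] by (simp add: topspace_SP_minus_diag)
  obtain \<psi> where cont: "continuous_map (SP_orbits n) (wproj (\<lambda>k. n - k) (n - 1)) \<psi>"
    and image: "\<psi> ` topspace (SP_orbits n) = ?h ` topspace (SP_minus_diag n)"
    and lift: "\<And>m. m \<in> topspace (SP_minus_diag n) \<Longrightarrow> \<psi> (aff_orbit m) = ?h m"
    using quotient_map_lift_exists[OF quotient_map_aff_orbit continuous_map_wclass_coefvec[OF assms]
        well_defined] by blast
  have onto: "\<psi> ` topspace (SP_orbits n) = topspace (wproj (\<lambda>k. n - k) (n - 1))"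
    unfolding image image_image[of "wclass _ _" "coefvec n", symmetric] coefvec_image_SP_minus_diag[OF assms]
    by (rule quotient_imp_surjective_map[OF quotient_map_wclass])
  show ?thesis
    using cont onto lift by (rule that)
qed

lemma inj_on_orbit_map:
  assumes "n > 0"
    and lift: "\<And>m. m \<in> topspace (SP_minus_diag n) \<Longrightarrow>
                 \<psi> (aff_orbit m) = wclass (\<lambda>k. n - k) (n - 1) (coefvec n m)"
  shows "inj_on \<psi> (topspace (SP_orbits n))"
proof (rule inj_onI)
  fix X Y assume XY: "X \<in> topspace (SP_orbits n)" "Y \<in> topspace (SP_orbits n)" and "\<psi> X = \<psi> Y"
  have orbits: "topspace (SP_orbits n) = aff_orbit ` topspace (SP_minus_diag n)"
    using quotient_imp_surjective_map[OF quotient_map_aff_orbit] by simp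
  from XY obtain m1 m2 where m: "m1 \<in> topspace (SP_minus_diag n)" "m2 \<in> topspace (SP_minus_diag n)"
    and "X = aff_orbit m1" "Y = aff_orbit m2"
    unfolding orbits by blast
  with \<open>\<psi> X = \<psi> Y\<close> lift wclass_coefvec_eq_iff[OF _ _ assms(1)] show "X = Y"
    by (simp add: topspace_SP_minus_diag)
qed

theorem mainTheorem3:
  fixes n :: nat
  assumes "n \<ge> 2"
  shows "\<exists>\<psi>. (\<forall>m \<in> topspace (SP_minus_diag n).
                 \<psi> (aff_orbit m) = wclass (\<lambda>k. n - k) (n - 1) (coefvec n m))
           \<and> homeomorphic_map (SP_orbits n) (wproj (\<lambda>k. n - k) (n - 1)) \<psi>"
proof -
  have "n > 0" and weights_pos: "\<forall>k<n - 1. n - k > 0"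
    using assms by auto
  obtain \<psi> where cont: "continuous_map (SP_orbits n) (wproj (\<lambda>k. n - k) (n - 1)) \<psi>"
    and onto: "\<psi> ` topspace (SP_orbits n) = topspace (wproj (\<lambda>k. n - k) (n - 1))"
    and lift: "\<And>m. m \<in> topspace (SP_minus_diag n) \<Longrightarrow>
                 \<psi> (aff_orbit m) = wclass (\<lambda>k. n - k) (n - 1) (coefvec n m)"
    using orbit_map_exists[OF \<open>n > 0\<close>] by blast
  have "homeomorphic_map (SP_orbits n) (wproj (\<lambda>k. n - k) (n - 1)) \<psi>"
    using continuous_imp_homeomorphic_map[OF cont compact_space_SP_orbits[OF \<open>n > 0\<close>]
        Hausdorff_space_wproj[OF weights_pos] onto inj_on_orbit_map[OF \<open>n > 0\<close> lift]] .
  with lift show ?thesis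
    by blast
qed

end
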